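(* Let $\mathbb{C}$ be a regular category. If $\mathbb{C}$ has finite 2-fold subobject decompositions, then $\mathbb{C}$ is a majority category.
   Context: A category is regular if it has finite limits and coequalizers of kernel pairs and regular epimorphisms are pullback-stable; the image of a subobject $S$ (represented by $s$) under a morphism $f$ is the subobject represented by the mono part of a regular epi–mono factorization of $fs$. $\mathbb{C}$ has finite 2-fold subobject decompositions if for every positive integer $n$, all objects $A_1,\dots,A_n$ and all subobjects $S,T$ of $A_1\times\cdots\times A_n$: if for all $i,j\in\{1,\dots,n\}$ the images of $S$ and $T$ under $(\pi_i,\pi_j):A_1\times\cdots\times A_n\to A_i\times A_j$ coincide, then $S=T$. For $w:S\to W$ and subobject $A$ of $W$, $w\in_S A$ means $w$ factors through a representative of $A$. A ternary relation $R\leqslant X\times Y\times Z$ is majority-selecting if for all $S$ and $x,x':S\to X$, $y,y':S\to Y$, $z,z':S\to Z$: $(x,y,z')\in_S R$, $(x,y',z)\in_S R$, $(x',y,z)\in_S R$ imply $(x,y,z)\in_S R$; $\mathbb{C}$ is a majority category if every ternary relation in it is majority-selecting. *)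

theory Defs
  imports Main
begin

record ('o, 'm) cat =
  cObj  :: "'o set"
  cArr  :: "'m set"
  cdom  :: "'m \<Rightarrow> 'o"
  ccod  :: "'m \<Rightarrow> 'o"
  cid   :: "'o \<Rightarrow> 'm"
  ccomp :: "'m \<Rightarrow> 'm \<Rightarrow> 'm"   (* ccomp C g f = g \<circ> f *)

definition homs :: "('o, 'm) cat \<Rightarrow> 'o \<Rightarrow> 'o \<Rightarrow> 'm set" where
  "homs C A B = {f \<in> cArr C. cdom C f = A \<and> ccod C f = B}"

definition category :: "('o, 'm) cat \<Rightarrow> bool" where
  "category C \<longleftrightarrow>
     (\<forall>f \<in> cArr C. cdom C f \<in> cObj C \<and> ccod C f \<in> cObj C) \<and>
     (\<forall>A \<in> cObj C. cid C A \<in> homs C A A) \<and>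
     (\<forall>f \<in> cArr C. \<forall>g \<in> cArr C. ccod C f = cdom C g \<longrightarrow>
        ccomp C g f \<in> homs C (cdom C f) (ccod C g)) \<and>
     (\<forall>f \<in> cArr C. ccomp C (cid C (ccod C f)) f = f \<and> ccomp C f (cid C (cdom C f)) = f) \<and>
     (\<forall>f \<in> cArr C. \<forall>g \<in> cArr C. \<forall>h \<in> cArr C.
        ccod C f = cdom C g \<and> ccod C g = cdom C h \<longrightarrow>
        ccomp C h (ccomp C g f) = ccomp C (ccomp C h g) f)"

definition is_mono :: "('o, 'm) cat \<Rightarrow> 'm \<Rightarrow> bool" where
  "is_mono C m \<longleftrightarrow> m \<in> cArr C \<and>
     (\<forall>g \<in> cArr C. \<forall>h \<in> cArr C.
        ccod C g = cdom C m \<and> ccod C h = cdom C m \<and> cdom C g = cdom C h \<and>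
        ccomp C m g = ccomp C m h \<longrightarrow> g = h)"

definition is_terminal :: "('o, 'm) cat \<Rightarrow> 'o \<Rightarrow> bool" where
  "is_terminal C T \<longleftrightarrow> T \<in> cObj C \<and> (\<forall>A \<in> cObj C. \<exists>!f. f \<in> homs C A T)"

definition is_pullback :: "('o, 'm) cat \<Rightarrow> 'm \<Rightarrow> 'm \<Rightarrow> 'm \<Rightarrow> 'm \<Rightarrow> bool" where
  "is_pullback C f g p q \<longleftrightarrow>
     f \<in> cArr C \<and> g \<in> cArr C \<and> ccod C f = ccod C g \<and>
     p \<in> homs C (cdom C p) (cdom C f) \<and> q \<in> homs C (cdom C p) (cdom C g) \<and>
     ccomp C f p = ccomp C g q \<and>
     (\<forall>x \<in> cArr C. \<forall>y \<in> cArr C.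
        cdom C x = cdom C y \<and> ccod C x = cdom C f \<and> ccod C y = cdom C g \<and>
        ccomp C f x = ccomp C g y \<longrightarrow>
        (\<exists>!u. u \<in> homs C (cdom C x) (cdom C p) \<and> ccomp C p u = x \<and> ccomp C q u = y))"

definition is_coequalizer :: "('o, 'm) cat \<Rightarrow> 'm \<Rightarrow> 'm \<Rightarrow> 'm \<Rightarrow> bool" where
  "is_coequalizer C a b e \<longleftrightarrow>
     a \<in> cArr C \<and> b \<in> cArr C \<and> cdom C a = cdom C b \<and> ccod C a = ccod C b \<and>
     e \<in> cArr C \<and> cdom C e = ccod C a \<and> ccomp C e a = ccomp C e b \<and>
     (\<forall>x \<in> cArr C. cdom C x = ccod C a \<and> ccomp C x a = ccomp C x b \<longrightarrow>
        (\<exists>!u. u \<in> homs C (ccod C e) (ccod C x) \<and> ccomp C u e = x))"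

definition regular_epi :: "('o, 'm) cat \<Rightarrow> 'm \<Rightarrow> bool" where
  "regular_epi C e \<longleftrightarrow> (\<exists>a b. is_coequalizer C a b e)"

definition has_finite_limits :: "('o, 'm) cat \<Rightarrow> bool" where
  "has_finite_limits C \<longleftrightarrow> (\<exists>T. is_terminal C T) \<and>
     (\<forall>f \<in> cArr C. \<forall>g \<in> cArr C. ccod C f = ccod C g \<longrightarrow> (\<exists>p q. is_pullback C f g p q))"

definition has_coequalizers_of_kernel_pairs :: "('o, 'm) cat \<Rightarrow> bool" where
  "has_coequalizers_of_kernel_pairs C \<longleftrightarrow>
     (\<forall>f p q. is_pullback C f f p q \<longrightarrow> (\<exists>e. is_coequalizer C p q e))"

definition regular_epis_pullback_stable :: "('o, 'm) cat \<Rightarrow> bool" where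
  "regular_epis_pullback_stable C \<longleftrightarrow>
     (\<forall>e g p q. regular_epi C e \<and> is_pullback C e g p q \<longrightarrow> regular_epi C q)"

definition regular_category :: "('o, 'm) cat \<Rightarrow> bool" where
  "regular_category C \<longleftrightarrow> category C \<and> has_finite_limits C \<and>
     has_coequalizers_of_kernel_pairs C \<and> regular_epis_pullback_stable C"

definition is_product :: "('o, 'm) cat \<Rightarrow> nat \<Rightarrow> (nat \<Rightarrow> 'o) \<Rightarrow> 'o \<Rightarrow> (nat \<Rightarrow> 'm) \<Rightarrow> bool" where
  "is_product C n A P \<pi> \<longleftrightarrow> P \<in> cObj C \<and> (\<forall>i<n. \<pi> i \<in> homs C P (A i)) \<and>
     (\<forall>X \<in> cObj C. \<forall>f. (\<forall>i<n. f i \<in> homs C X (A i)) \<longrightarrow>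
        (\<exists>!u. u \<in> homs C X P \<and> (\<forall>i<n. ccomp C (\<pi> i) u = f i)))"

definition sub_le :: "('o, 'm) cat \<Rightarrow> 'm \<Rightarrow> 'm \<Rightarrow> bool" where
  "sub_le C s t \<longleftrightarrow> (\<exists>u \<in> homs C (cdom C s) (cdom C t). ccomp C t u = s)"

definition same_sub :: "('o, 'm) cat \<Rightarrow> 'm \<Rightarrow> 'm \<Rightarrow> bool" where
  "same_sub C s t \<longleftrightarrow> sub_le C s t \<and> sub_le C t s"

definition is_image :: "('o, 'm) cat \<Rightarrow> 'm \<Rightarrow> 'm \<Rightarrow> 'm \<Rightarrow> bool" where
  "is_image C f s m \<longleftrightarrow> (\<exists>e. regular_epi C e \<and> is_mono C m \<and>
     cdom C e = cdom C s \<and> ccod C e = cdom C m \<and> ccomp C m e = ccomp C f s)"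

definition mem_sub :: "('o, 'm) cat \<Rightarrow> 'm \<Rightarrow> 'm \<Rightarrow> bool" where
  "mem_sub C w r \<longleftrightarrow> (\<exists>u \<in> homs C (cdom C w) (cdom C r). ccomp C r u = w)"

definition has_finite_2fold_subobject_decompositions :: "('o, 'm) cat \<Rightarrow> bool" where
  "has_finite_2fold_subobject_decompositions C \<longleftrightarrow>
     (\<forall>n A P \<pi>. 0 < n \<and> is_product C n A P \<pi> \<longrightarrow>
       (\<forall>s t. is_mono C s \<and> ccod C s = P \<and> is_mono C t \<and> ccod C t = P \<and>
          (\<forall>i<n. \<forall>j<n. \<forall>Q \<rho> h.
              is_product C 2 (\<lambda>k. if k = 0 then A i else A j) Q \<rho> \<and>
              h \<in> homs C P Q \<and> ccomp C (\<rho> 0) h = \<pi> i \<and> ccomp C (\<rho> 1) h = \<pi> j \<longrightarrow>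
              (\<forall>m m'. is_image C h s m \<and> is_image C h t m' \<longrightarrow> same_sub C m m'))
          \<longrightarrow> same_sub C s t))"

definition triple :: "'o \<Rightarrow> 'o \<Rightarrow> 'o \<Rightarrow> nat \<Rightarrow> 'o" where
  "triple X Y Z = (\<lambda>k. if k = 0 then X else if k = 1 then Y else Z)"

definition has_components :: "('o, 'm) cat \<Rightarrow> (nat \<Rightarrow> 'm) \<Rightarrow> 'm \<Rightarrow> 'm \<Rightarrow> 'm \<Rightarrow> 'm \<Rightarrow> bool" where
  "has_components C \<pi> w a b c \<longleftrightarrow>
     ccomp C (\<pi> 0) w = a \<and> ccomp C (\<pi> 1) w = b \<and> ccomp C (\<pi> 2) w = c"

definition majority_selecting ::
  "('o, 'm) cat \<Rightarrow> 'o \<Rightarrow> 'o \<Rightarrow> 'o \<Rightarrow> 'o \<Rightarrow> (nat \<Rightarrow> 'm) \<Rightarrow> 'm \<Rightarrow> bool" where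
  "majority_selecting C X Y Z P \<pi> r \<longleftrightarrow>
     (\<forall>S \<in> cObj C. \<forall>x \<in> homs C S X. \<forall>x' \<in> homs C S X.
        \<forall>y \<in> homs C S Y. \<forall>y' \<in> homs C S Y. \<forall>z \<in> homs C S Z. \<forall>z' \<in> homs C S Z.
        \<forall>w1 \<in> homs C S P. \<forall>w2 \<in> homs C S P. \<forall>w3 \<in> homs C S P. \<forall>w \<in> homs C S P.
          has_components C \<pi> w1 x y z' \<and> has_components C \<pi> w2 x y' z \<and>
          has_components C \<pi> w3 x' y z \<and> has_components C \<pi> w x y z \<and>
          mem_sub C w1 r \<and> mem_sub C w2 r \<and> mem_sub C w3 r \<longrightarrow> mem_sub C w r)"

definition majority_category :: "('o, 'm) cat \<Rightarrow> bool" where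
  "majority_category C \<longleftrightarrow>
     (\<forall>X Y Z P \<pi> r. X \<in> cObj C \<and> Y \<in> cObj C \<and> Z \<in> cObj C \<and>
        is_product C 3 (triple X Y Z) P \<pi> \<and> is_mono C r \<and> ccod C r = P \<longrightarrow>
        majority_selecting C X Y Z P \<pi> r)"

end

theory Submission
  imports Defs
begin

text \<open>Let \<open>r : R \<rightarrowtail> X \<times> Y \<times> Z\<close> and let \<open>(x, y, z')\<close>, \<open>(x, y', z)\<close>, \<open>(x', y, z)\<close>
  be generalised elements of R. Build, by kernel pairs and pullbacks, the object D of triples of
  points of R that agree pairwise on X, on Y and on Z, with the map \<open>g : D \<rightarrow> X \<times> Y \<times> Z\<close>
  reading off the agreed coordinates; the three given elements yield a point of D over
  \<open>(x, y, z)\<close>. The diagonal shows that r factors through g, and every pair of coordinates of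
  g is also the pair of coordinates of a point of R. Hence the image s of g and the relation R
  have the same images under every binary projection, so \<open>s = R\<close> by the 2-fold
  decomposition property, and \<open>(x, y, z)\<close>, which factors through g, lies in R. Images exist
  because a regular category has regular epi--mono factorisations: the coequaliser of the
  kernel pair of f is followed by a mono.\<close>

lemma same_sub_of_2fold_decompositions:
  assumes dec: "has_finite_2fold_subobject_decompositions C"
    and prod: "is_product C n A P \<pi>" "0 < n"
    and s: "is_mono C s" "ccod C s = P" and t: "is_mono C t" "ccod C t = P"
    and pairs: "\<And>i j Q \<rho> h m m'. i < n \<Longrightarrow> j < n \<Longrightarrow>
      is_product C 2 (\<lambda>k. if k = 0 then A i else A j) Q \<rho> \<Longrightarrow> h \<in> homs C P Q \<Longrightarrow>
      ccomp C (\<rho> 0) h = \<pi> i \<Longrightarrow> ccomp C (\<rho> 1) h = \<pi> j \<Longrightarrow>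
      is_image C h s m \<Longrightarrow> is_image C h t m' \<Longrightarrow> same_sub C m m'"
  shows "same_sub C s t"
proof -
  have "0 < n \<and> is_product C n A P \<pi>"
    using prod by simp
  from dec[unfolded has_finite_2fold_subobject_decompositions_def, rule_format, OF this]
  show ?thesis
    using s t pairs by blast
qed

locale category_ctx =
  fixes C :: "('o, 'm) cat"
  assumes category: "category C"
begin

abbreviation comp (infixr "\<cdot>" 55) where "g \<cdot> f \<equiv> ccomp C g f"
abbreviation "Arr \<equiv> cArr C"
abbreviation "dm \<equiv> cdom C"
abbreviation "cd \<equiv> ccod C"

lemma comp_arr [simp]: "f \<in> Arr \<Longrightarrow> g \<in> Arr \<Longrightarrow> cd f = dm g \<Longrightarrow> g \<cdot> f \<in> Arr"
  and dom_comp [simp]: "f \<in> Arr \<Longrightarrow> g \<in> Arr \<Longrightarrow> cd f = dm g \<Longrightarrow> dm (g \<cdot> f) = dm f"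
  and cod_comp [simp]: "f \<in> Arr \<Longrightarrow> g \<in> Arr \<Longrightarrow> cd f = dm g \<Longrightarrow> cd (g \<cdot> f) = cd g"
  using category unfolding category_def homs_def by blast+

lemma comp_assoc [simp]:
  "f \<in> Arr \<Longrightarrow> g \<in> Arr \<Longrightarrow> h \<in> Arr \<Longrightarrow> cd f = dm g \<Longrightarrow> cd g = dm h \<Longrightarrow>
   (h \<cdot> g) \<cdot> f = h \<cdot> (g \<cdot> f)"
  using category unfolding category_def by metis

lemma dom_obj: "f \<in> Arr \<Longrightarrow> dm f \<in> cObj C"
  using category unfolding category_def by blast

lemma id_hom: "A \<in> cObj C \<Longrightarrow> cid C A \<in> homs C A A"
  and comp_id: "f \<in> Arr \<Longrightarrow> f \<cdot> cid C (dm f) = f"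
  using category unfolding category_def by blast+

lemma comp_assoc_eq:
  assumes "k \<cdot> h = l" "x \<in> Arr" "h \<in> Arr" "k \<in> Arr" "cd x = dm h" "cd h = dm k"
  shows "k \<cdot> (h \<cdot> x) = l \<cdot> x"
  using assms comp_assoc[of x h k] by simp

lemma mem_sub_trans:
  assumes "mem_sub C w g" "mem_sub C g r" "r \<in> Arr"
  shows "mem_sub C w r"
proof -
  obtain u where u: "u \<in> homs C (dm w) (dm g)" "g \<cdot> u = w"
    using assms(1) unfolding mem_sub_def by blast
  obtain v where v: "v \<in> homs C (dm g) (dm r)" "r \<cdot> v = g"
    using assms(2) unfolding mem_sub_def by blast
  have vu: "v \<cdot> u \<in> homs C (dm w) (dm r)"
    using u v by (simp add: homs_def)
  have "r \<cdot> (v \<cdot> u) = w"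
    using u v assms(3) comp_assoc[of u v r] by (simp add: homs_def)
  with vu show ?thesis
    unfolding mem_sub_def by blast
qed

lemma ex1_unique: "\<exists>!x. P x \<Longrightarrow> P a \<Longrightarrow> P b \<Longrightarrow> a = b"
  by blast

lemma mono_arr: "is_mono C m \<Longrightarrow> m \<in> Arr"
  unfolding is_mono_def by blast

lemma mono_cancel:
  assumes "is_mono C m" "g \<in> Arr" "h \<in> Arr" "cd g = dm m" "cd h = dm m" "dm g = dm h"
    "m \<cdot> g = m \<cdot> h"
  shows "g = h"
  using assms unfolding is_mono_def by blast

lemma coequalizer_arrs:
  assumes "is_coequalizer C a b e"
  shows "a \<in> Arr" "b \<in> Arr" "dm a = dm b" "cd a = cd b" "e \<in> Arr" "dm e = cd a"
    "e \<cdot> a = e \<cdot> b"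
  using assms unfolding is_coequalizer_def by blast+

lemma coequalizer_factor_unique:
  assumes "is_coequalizer C a b e" "x \<in> Arr" "dm x = cd a" "x \<cdot> a = x \<cdot> b"
  shows "\<exists>!u. u \<in> homs C (cd e) (cd x) \<and> u \<cdot> e = x"
  using assms unfolding is_coequalizer_def by blast

lemma regular_epi_arr: "regular_epi C e \<Longrightarrow> e \<in> Arr"
  unfolding regular_epi_def is_coequalizer_def by blast

lemma regular_epi_cancel:
  assumes "regular_epi C e" "x \<in> Arr" "y \<in> Arr" "dm x = cd e" "dm y = cd e" "cd x = cd y"
    "x \<cdot> e = y \<cdot> e"
  shows "x = y"
proof -
  obtain a b where co: "is_coequalizer C a b e"
    using assms(1) unfolding regular_epi_def by blast
  note e = coequalizer_arrs[OF co]
  have "(x \<cdot> e) \<cdot> a = (x \<cdot> e) \<cdot> b"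
    using e assms by simp
  then have "\<exists>!u. u \<in> homs C (cd e) (cd x) \<and> u \<cdot> e = x \<cdot> e"
    using coequalizer_factor_unique[OF co, of "x \<cdot> e"] e assms by simp
  then show ?thesis
    by (rule ex1_unique) (use assms in \<open>simp_all add: homs_def\<close>)
qed

lemma regular_epi_mono_lift:
  assumes e: "regular_epi C e" and m: "is_mono C m"
    and f: "f \<in> homs C (dm e) (dm m)" and v: "v \<in> homs C (cd e) (cd m)"
    and square: "v \<cdot> e = m \<cdot> f"
  obtains d where "d \<in> homs C (cd e) (dm m)" "m \<cdot> d = v"
proof -
  obtain a b where co: "is_coequalizer C a b e"
    using e unfolding regular_epi_def by blast
  note ab = coequalizer_arrs[OF co]
  have ma: "m \<in> Arr" using mono_arr[OF m] .
  have "m \<cdot> (f \<cdot> a) = v \<cdot> (e \<cdot> a)"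
    using ab ma f v square comp_assoc[of a f m] comp_assoc[of a e v] by (simp add: homs_def)
  also have "\<dots> = m \<cdot> (f \<cdot> b)"
    using ab ma f v square comp_assoc[of b f m] comp_assoc[of b e v] by (simp add: homs_def)
  finally have "f \<cdot> a = f \<cdot> b"
    using mono_cancel[OF m] ab f by (simp add: homs_def)
  then obtain d where d: "d \<in> homs C (cd e) (dm m)" "d \<cdot> e = f"
    using coequalizer_factor_unique[OF co, of f] ab f by (auto simp: homs_def)
  have "(m \<cdot> d) \<cdot> e = v \<cdot> e"
    using d ma ab square by (simp add: homs_def)
  then have "m \<cdot> d = v"
    using regular_epi_cancel[OF e, of "m \<cdot> d" v] d ma v by (simp add: homs_def)
  with d show ?thesis using that by blast
qed

lemma pullback_arrs:
  assumes "is_pullback C f g p q"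
  shows "p \<in> homs C (dm p) (dm f)" "q \<in> homs C (dm p) (dm g)" "f \<cdot> p = g \<cdot> q"
  using assms unfolding is_pullback_def by simp_all

lemma pullback_lift:
  assumes "is_pullback C f g p q" "x \<in> homs C T (dm f)" "y \<in> homs C T (dm g)"
    "f \<cdot> x = g \<cdot> y"
  obtains u where "u \<in> homs C T (dm p)" "p \<cdot> u = x" "q \<cdot> u = y"
proof -
  have "\<forall>x \<in> Arr. \<forall>y \<in> Arr. dm x = dm y \<and> cd x = dm f \<and> cd y = dm g \<and> f \<cdot> x = g \<cdot> y \<longrightarrow>
          (\<exists>!u. u \<in> homs C (dm x) (dm p) \<and> p \<cdot> u = x \<and> q \<cdot> u = y)"
    using assms(1) unfolding is_pullback_def by (elim conjE)
  moreover have x: "x \<in> Arr" "dm x = T" "cd x = dm f" and y: "y \<in> Arr" "dm y = T" "cd y = dm g"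
    using assms(2,3) unfolding homs_def by simp_all
  ultimately have "\<exists>!u. u \<in> homs C T (dm p) \<and> p \<cdot> u = x \<and> q \<cdot> u = y"
    using assms(4) by (metis (no_types, lifting))
  then show ?thesis
    using that by (metis ex1_implies_ex)
qed

lemma product_proj:
  "is_product C n A P \<pi> \<Longrightarrow> i < n \<Longrightarrow> \<pi> i \<in> homs C P (A i)"
  unfolding is_product_def by (elim conjE) blast

lemma product_lift:
  assumes "is_product C n A P \<pi>" "T \<in> cObj C" "\<forall>i<n. f i \<in> homs C T (A i)"
  obtains u where "u \<in> homs C T P" "\<forall>i<n. \<pi> i \<cdot> u = f i"
  using assms unfolding is_product_def by blast

lemma product_ext:
  assumes prod: "is_product C n A P \<pi>"
    and u: "u1 \<in> homs C T P" "u2 \<in> homs C T P" and eq: "\<forall>i<n. \<pi> i \<cdot> u1 = \<pi> i \<cdot> u2"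
  shows "u1 = u2"
proof -
  have univ: "\<forall>X \<in> cObj C. \<forall>f. (\<forall>i<n. f i \<in> homs C X (A i)) \<longrightarrow>
                (\<exists>!u. u \<in> homs C X P \<and> (\<forall>i<n. \<pi> i \<cdot> u = f i))"
    using prod unfolding is_product_def by (elim conjE)
  have T: "T \<in> cObj C"
    using u dom_obj unfolding homs_def by blast
  have "\<pi> i \<cdot> u1 \<in> homs C T (A i)" if "i < n" for i
    using product_proj[OF prod that] u by (auto simp: homs_def)
  from univ[rule_format, OF T this]
  show ?thesis
    by (rule ex1_unique) (use u eq in auto)
qed

lemma less_3_cases: "(i::nat) < 3 \<longleftrightarrow> i = 0 \<or> i = 1 \<or> i = 2"
  by auto

lemma product2_ext:
  assumes "is_product C 2 A P \<pi>" "u1 \<in> homs C T P" "u2 \<in> homs C T P"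
    "\<pi> 0 \<cdot> u1 = \<pi> 0 \<cdot> u2" "\<pi> 1 \<cdot> u1 = \<pi> 1 \<cdot> u2"
  shows "u1 = u2"
proof (rule product_ext[OF assms(1-3)], intro allI impI)
  fix i :: nat
  assume "i < 2"
  then show "\<pi> i \<cdot> u1 = \<pi> i \<cdot> u2"
    using assms(4,5) less_2_cases by auto
qed

lemma product3_ext:
  assumes "is_product C 3 A P \<pi>" "u1 \<in> homs C T P" "u2 \<in> homs C T P"
    "\<pi> 0 \<cdot> u1 = \<pi> 0 \<cdot> u2" "\<pi> 1 \<cdot> u1 = \<pi> 1 \<cdot> u2" "\<pi> 2 \<cdot> u1 = \<pi> 2 \<cdot> u2"
  shows "u1 = u2"
proof (rule product_ext[OF assms(1-3)], intro allI impI)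
  fix i :: nat
  assume "i < 3"
  then show "\<pi> i \<cdot> u1 = \<pi> i \<cdot> u2"
    using assms(4-6) less_3_cases by auto
qed

lemma product3_lift:
  assumes "is_product C 3 (triple X Y Z) P \<pi>"
    "f0 \<in> homs C T X" "f1 \<in> homs C T Y" "f2 \<in> homs C T Z"
  obtains u where "u \<in> homs C T P" "\<pi> 0 \<cdot> u = f0" "\<pi> 1 \<cdot> u = f1" "\<pi> 2 \<cdot> u = f2"
proof -
  let ?f = "\<lambda>i::nat. if i = 0 then f0 else if i = 1 then f1 else f2"
  have T: "T \<in> cObj C"
    using assms(2) dom_obj unfolding homs_def by blast
  have "\<forall>i<3. ?f i \<in> homs C T (triple X Y Z i)"
    using assms by (auto simp: triple_def less_3_cases)
  from product_lift[OF assms(1) T this] obtain u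
    where "u \<in> homs C T P" "\<forall>i<3. \<pi> i \<cdot> u = ?f i" .
  then show ?thesis
    using that[of u] by simp
qed

lemma imageE:
  assumes "is_image C h a m" "h \<in> homs C P Q" "a \<in> homs C A P"
  obtains E where "regular_epi C E" "is_mono C m" "E \<in> homs C A (dm m)" "m \<in> homs C (dm m) Q"
    "m \<cdot> E = h \<cdot> a"
proof -
  obtain E where E: "regular_epi C E" "is_mono C m" "dm E = dm a" "cd E = dm m" "m \<cdot> E = h \<cdot> a"
    using assms(1) unfolding is_image_def by blast
  have "cd m = cd (m \<cdot> E)"
    using E(1,2,4) regular_epi_arr mono_arr by simp
  also have "\<dots> = Q"
    using E(5) assms(2,3) by (simp add: homs_def)
  finally show ?thesis
    using that E assms(3) regular_epi_arr mono_arr by (simp add: homs_def)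
qed

lemma image_le_of_factorization:
  assumes im: "is_image C h a m" and m': "is_mono C m'" "cd m' = Q"
    and h: "h \<in> homs C P Q" and a: "a \<in> homs C A P"
    and y: "y \<in> homs C A (dm m')" and fac: "h \<cdot> a = m' \<cdot> y"
  shows "sub_le C m m'"
proof -
  obtain E where E: "regular_epi C E" "is_mono C m" "E \<in> homs C A (dm m)"
    "m \<in> homs C (dm m) Q" "m \<cdot> E = h \<cdot> a"
    using imageE[OF im h a] by blast
  obtain d where "d \<in> homs C (cd E) (dm m')" "m' \<cdot> d = m"
    using regular_epi_mono_lift[OF E(1) m'(1), of y m] E y fac m'(2) by (auto simp: homs_def)
  then show ?thesis
    unfolding sub_le_def using E(3) by (auto simp: homs_def)
qed

lemma same_image_of_cover:
  assumes im: "is_image C h s m" "is_image C h r m'"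
    and h: "h \<in> homs C P Q" and s: "s \<in> homs C I P" and r: "r \<in> homs C R P"
    and e: "regular_epi C e" "e \<in> homs C D I" and c: "c \<in> homs C D R"
    and cover: "h \<cdot> (s \<cdot> e) = h \<cdot> (r \<cdot> c)"
    and v: "v \<in> homs C R I" and r_le_s: "s \<cdot> v = r"
  shows "same_sub C m m'"
proof -
  obtain E where E: "regular_epi C E" "is_mono C m" "E \<in> homs C I (dm m)"
    "m \<in> homs C (dm m) Q" "m \<cdot> E = h \<cdot> s"
    using imageE[OF im(1) h s] by blast
  obtain E' where E': "regular_epi C E'" "is_mono C m'" "E' \<in> homs C R (dm m')"
    "m' \<in> homs C (dm m') Q" "m' \<cdot> E' = h \<cdot> r"
    using imageE[OF im(2) h r] by blast
  have "(h \<cdot> s) \<cdot> e = (h \<cdot> r) \<cdot> c"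
    using cover h s r e(2) c by (simp add: homs_def)
  also have "\<dots> = (m' \<cdot> E') \<cdot> c"
    using E'(5) by simp
  also have "\<dots> = m' \<cdot> (E' \<cdot> c)"
    using E'(3,4) c by (simp add: homs_def)
  finally obtain d where d: "d \<in> homs C (cd e) (dm m')" "m' \<cdot> d = h \<cdot> s"
    using regular_epi_mono_lift[OF e(1) E'(2), of "E' \<cdot> c" "h \<cdot> s"] e(2) c E'(3,4) h s
    by (auto simp: homs_def)
  have le: "sub_le C m m'"
    using image_le_of_factorization[OF im(1) E'(2) _ h s, of d] d e(2) E'(4)
    by (simp add: homs_def)
  have "h \<cdot> r = (h \<cdot> s) \<cdot> v"
    using r_le_s h s v by (auto simp: homs_def)
  also have "\<dots> = (m \<cdot> E) \<cdot> v"
    using E(5) by simp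
  also have "\<dots> = m \<cdot> (E \<cdot> v)"
    using E(3,4) v by (simp add: homs_def)
  finally have "sub_le C m' m"
    using image_le_of_factorization[OF im(2) E(2) _ h r, of "E \<cdot> v"] v E(3,4)
    by (simp add: homs_def)
  with le show ?thesis
    unfolding same_sub_def by blast
qed

end

text \<open>In generalised elements: a point of \<open>dm p1\<close> is a pair \<open>(\<rho>1, \<rho>2)\<close> of points of R
  with equal X-coordinate and \<open>\<phi>\<close> sends it to \<open>(x \<rho>1, y \<rho>1, z \<rho>2)\<close>; a point of
  \<open>dm p2\<close> is a pair \<open>(\<rho>3, \<rho>4)\<close> with equal Y-coordinate and \<open>\<psi>\<close> sends it to
  \<open>(x \<rho>4, y \<rho>3, z \<rho>3)\<close>. On the pullback \<open>D = dm d\<phi>\<close> both agree, so the coordinates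
  of the majority map are matched pairwise by \<open>\<rho>1\<close> (X, Y), \<open>\<rho>2\<close> (X, Z) and
  \<open>\<rho>3\<close> (Y, Z).\<close>

locale majority_diagram = category_ctx +
  fixes X Y Z P \<pi> R r p1 q1 p2 q2 \<phi> \<psi> d\<phi> d\<psi>
  assumes product: "is_product C 3 (triple X Y Z) P \<pi>"
    and r: "r \<in> homs C R P"
    and kernel_pair_X: "is_pullback C (\<pi> 0 \<cdot> r) (\<pi> 0 \<cdot> r) p1 q1"
    and kernel_pair_Y: "is_pullback C (\<pi> 1 \<cdot> r) (\<pi> 1 \<cdot> r) p2 q2"
    and \<phi>: "\<phi> \<in> homs C (dm p1) P" "\<pi> 0 \<cdot> \<phi> = \<pi> 0 \<cdot> (r \<cdot> p1)"
      "\<pi> 1 \<cdot> \<phi> = \<pi> 1 \<cdot> (r \<cdot> p1)" "\<pi> 2 \<cdot> \<phi> = \<pi> 2 \<cdot> (r \<cdot> q1)"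
    and \<psi>: "\<psi> \<in> homs C (dm p2) P" "\<pi> 0 \<cdot> \<psi> = \<pi> 0 \<cdot> (r \<cdot> q2)"
      "\<pi> 1 \<cdot> \<psi> = \<pi> 1 \<cdot> (r \<cdot> p2)" "\<pi> 2 \<cdot> \<psi> = \<pi> 2 \<cdot> (r \<cdot> p2)"
    and glue: "is_pullback C \<phi> \<psi> d\<phi> d\<psi>"
begin

lemma proj_hom: "\<pi> 0 \<in> homs C P X" "\<pi> 1 \<in> homs C P Y" "\<pi> 2 \<in> homs C P Z"
  using product_proj[OF product, of 0] product_proj[OF product, of 1]
    product_proj[OF product, of 2]
  by (simp_all add: triple_def)

lemma diagram_homs:
  "p1 \<in> homs C (dm p1) R" "q1 \<in> homs C (dm p1) R" "p2 \<in> homs C (dm p2) R" "q2 \<in> homs C (dm p2) R"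
  "d\<phi> \<in> homs C (dm d\<phi>) (dm p1)" "d\<psi> \<in> homs C (dm d\<phi>) (dm p2)"
  using pullback_arrs[OF kernel_pair_X] pullback_arrs[OF kernel_pair_Y] pullback_arrs[OF glue]
    proj_hom r \<phi>(1) \<psi>(1)
  by (simp_all add: homs_def)

lemmas homs = proj_hom diagram_homs r \<phi>(1) \<psi>(1)

abbreviation majority_map where "majority_map \<equiv> \<phi> \<cdot> d\<phi>"

lemma \<phi>_comp:
  assumes "v \<in> homs C T (dm p1)"
  shows "\<pi> 0 \<cdot> (\<phi> \<cdot> v) = \<pi> 0 \<cdot> (r \<cdot> (p1 \<cdot> v))" "\<pi> 1 \<cdot> (\<phi> \<cdot> v) = \<pi> 1 \<cdot> (r \<cdot> (p1 \<cdot> v))"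
    "\<pi> 2 \<cdot> (\<phi> \<cdot> v) = \<pi> 2 \<cdot> (r \<cdot> (q1 \<cdot> v))" "\<pi> 0 \<cdot> (r \<cdot> (q1 \<cdot> v)) = \<pi> 0 \<cdot> (r \<cdot> (p1 \<cdot> v))"
  using assms homs comp_assoc_eq[OF \<phi>(2), of v] comp_assoc_eq[OF \<phi>(3), of v]
    comp_assoc_eq[OF \<phi>(4), of v] comp_assoc_eq[OF pullback_arrs(3)[OF kernel_pair_X], of v]
  by (simp_all add: homs_def)

lemma \<psi>_comp:
  assumes "v \<in> homs C T (dm p2)"
  shows "\<pi> 0 \<cdot> (\<psi> \<cdot> v) = \<pi> 0 \<cdot> (r \<cdot> (q2 \<cdot> v))" "\<pi> 1 \<cdot> (\<psi> \<cdot> v) = \<pi> 1 \<cdot> (r \<cdot> (p2 \<cdot> v))"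
    "\<pi> 2 \<cdot> (\<psi> \<cdot> v) = \<pi> 2 \<cdot> (r \<cdot> (p2 \<cdot> v))"
  using assms homs comp_assoc_eq[OF \<psi>(2), of v] comp_assoc_eq[OF \<psi>(3), of v]
    comp_assoc_eq[OF \<psi>(4), of v]
  by (simp_all add: homs_def)

lemma factors_through_majority_map:
  assumes u: "u1 \<in> homs C S R" "u2 \<in> homs C S R" "u3 \<in> homs C S R" and w: "w \<in> homs C S P"
    and agree: "\<pi> 0 \<cdot> (r \<cdot> u1) = \<pi> 0 \<cdot> (r \<cdot> u2)" "\<pi> 1 \<cdot> (r \<cdot> u3) = \<pi> 1 \<cdot> (r \<cdot> u1)"
      "\<pi> 2 \<cdot> (r \<cdot> u3) = \<pi> 2 \<cdot> (r \<cdot> u2)"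
    and w_comp: "\<pi> 0 \<cdot> w = \<pi> 0 \<cdot> (r \<cdot> u1)" "\<pi> 1 \<cdot> w = \<pi> 1 \<cdot> (r \<cdot> u1)"
      "\<pi> 2 \<cdot> w = \<pi> 2 \<cdot> (r \<cdot> u2)"
  shows "mem_sub C w majority_map"
proof -
  have "u1 \<in> homs C S (dm (\<pi> 0 \<cdot> r))" "u2 \<in> homs C S (dm (\<pi> 0 \<cdot> r))"
    "(\<pi> 0 \<cdot> r) \<cdot> u1 = (\<pi> 0 \<cdot> r) \<cdot> u2"
    using u agree(1) homs by (simp_all add: homs_def)
  then obtain \<delta>1 where \<delta>1: "\<delta>1 \<in> homs C S (dm p1)" "p1 \<cdot> \<delta>1 = u1" "q1 \<cdot> \<delta>1 = u2"
    by (rule pullback_lift[OF kernel_pair_X])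
  have "u3 \<in> homs C S (dm (\<pi> 1 \<cdot> r))" "u1 \<in> homs C S (dm (\<pi> 1 \<cdot> r))"
    "(\<pi> 1 \<cdot> r) \<cdot> u3 = (\<pi> 1 \<cdot> r) \<cdot> u1"
    using u agree(2) homs by (simp_all add: homs_def)
  then obtain \<delta>2 where \<delta>2: "\<delta>2 \<in> homs C S (dm p2)" "p2 \<cdot> \<delta>2 = u3" "q2 \<cdot> \<delta>2 = u1"
    by (rule pullback_lift[OF kernel_pair_Y])
  have \<phi>\<delta>1: "\<phi> \<cdot> \<delta>1 = w"
    by (rule product3_ext[OF product]) (use \<delta>1 \<phi>_comp[OF \<delta>1(1)] w w_comp homs in \<open>simp_all add: homs_def\<close>)
  have "\<psi> \<cdot> \<delta>2 = w"
    by (rule product3_ext[OF product])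
      (use \<delta>2 \<psi>_comp[OF \<delta>2(1)] w w_comp agree homs in \<open>simp_all add: homs_def\<close>)
  then have "\<delta>1 \<in> homs C S (dm \<phi>)" "\<delta>2 \<in> homs C S (dm \<psi>)" "\<phi> \<cdot> \<delta>1 = \<psi> \<cdot> \<delta>2"
    using \<phi>\<delta>1 \<delta>1(1) \<delta>2(1) homs by (simp_all add: homs_def)
  then obtain \<sigma> where \<sigma>: "\<sigma> \<in> homs C S (dm d\<phi>)" "d\<phi> \<cdot> \<sigma> = \<delta>1"
    by (rule pullback_lift[OF glue])
  then have "(\<phi> \<cdot> d\<phi>) \<cdot> \<sigma> = w"
    using \<phi>\<delta>1 homs by (simp add: homs_def)
  with \<sigma> show ?thesis
    unfolding mem_sub_def using w homs by (auto simp: homs_def)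
qed

lemma pairwise_covered:
  assumes "i < 3" "j < 3"
  shows "\<exists>c \<in> homs C (dm d\<phi>) R.
    \<pi> i \<cdot> majority_map = \<pi> i \<cdot> (r \<cdot> c) \<and> \<pi> j \<cdot> majority_map = \<pi> j \<cdot> (r \<cdot> c)"
proof -
  have XY: "\<pi> 0 \<cdot> (\<phi> \<cdot> d\<phi>) = \<pi> 0 \<cdot> (r \<cdot> (p1 \<cdot> d\<phi>))"
    "\<pi> 1 \<cdot> (\<phi> \<cdot> d\<phi>) = \<pi> 1 \<cdot> (r \<cdot> (p1 \<cdot> d\<phi>))"
    using \<phi>_comp(1,2)[OF diagram_homs(5)] .
  have XZ: "\<pi> 0 \<cdot> (\<phi> \<cdot> d\<phi>) = \<pi> 0 \<cdot> (r \<cdot> (q1 \<cdot> d\<phi>))"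
    "\<pi> 2 \<cdot> (\<phi> \<cdot> d\<phi>) = \<pi> 2 \<cdot> (r \<cdot> (q1 \<cdot> d\<phi>))"
    using \<phi>_comp[OF diagram_homs(5)] by simp_all
  have YZ: "\<pi> 1 \<cdot> (\<phi> \<cdot> d\<phi>) = \<pi> 1 \<cdot> (r \<cdot> (p2 \<cdot> d\<psi>))"
    "\<pi> 2 \<cdot> (\<phi> \<cdot> d\<phi>) = \<pi> 2 \<cdot> (r \<cdot> (p2 \<cdot> d\<psi>))"
    using \<psi>_comp(2,3)[OF diagram_homs(6)] pullback_arrs(3)[OF glue] by simp_all
  have covers: "p1 \<cdot> d\<phi> \<in> homs C (dm d\<phi>) R" "q1 \<cdot> d\<phi> \<in> homs C (dm d\<phi>) R"
    "p2 \<cdot> d\<psi> \<in> homs C (dm d\<phi>) R"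
    using homs by (simp_all add: homs_def)
  consider "i \<in> {0, 1}" "j \<in> {0, 1}" | "i \<in> {0, 2}" "j \<in> {0, 2}" | "i \<in> {1, 2}" "j \<in> {1, 2}"
    using assms less_3_cases by auto
  then show ?thesis
  proof cases
    case 1
    with XY show ?thesis by (intro bexI[OF _ covers(1)]) auto
  next
    case 2
    with XZ show ?thesis by (intro bexI[OF _ covers(2)]) auto
  next
    case 3
    with YZ show ?thesis by (intro bexI[OF _ covers(3)]) auto
  qed
qed

end

locale regular_ctx = category_ctx +
  assumes regular: "regular_category C"
begin

lemma pullback_exists:
  assumes "f \<in> Arr" "g \<in> Arr" "cd f = cd g"
  obtains p q where "is_pullback C f g p q"
  using regular assms unfolding regular_category_def has_finite_limits_def by blast

lemma regular_epi_pullback: "regular_epi C e \<Longrightarrow> is_pullback C e g p q \<Longrightarrow> regular_epi C q"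
  using regular unfolding regular_category_def regular_epis_pullback_stable_def by blast

lemma kernel_pair_coequalizer:
  assumes "is_pullback C f f p q"
  obtains e where "is_coequalizer C p q e"
  using regular assms unfolding regular_category_def has_coequalizers_of_kernel_pairs_def by blast

lemma regular_epi_lift_pair:
  assumes e: "regular_epi C e" and x: "x \<in> homs C T (cd e)" and y: "y \<in> homs C T (cd e)"
  obtains e1 e2 a b where "regular_epi C e1" "regular_epi C e2" "e1 \<in> homs C (cd e2) T"
    "a \<in> homs C (dm e2) (dm e)" "b \<in> homs C (dm e2) (dm e)"
    "e \<cdot> a = x \<cdot> (e1 \<cdot> e2)" "e \<cdot> b = y \<cdot> (e1 \<cdot> e2)"
proof -
  have ea: "e \<in> Arr" using regular_epi_arr[OF e] .
  have xT: "x \<in> Arr" "dm x = T" "cd x = cd e" and yT: "y \<in> Arr" "dm y = T" "cd y = cd e"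
    using x y by (simp_all add: homs_def)
  obtain a1 e1 where pb1: "is_pullback C e x a1 e1"
    by (rule pullback_exists[OF ea xT(1) xT(3)[symmetric]])
  note P1 = pullback_arrs[OF pb1, unfolded homs_def]
  have ye1: "y \<cdot> e1 \<in> Arr" "cd (y \<cdot> e1) = cd e"
    using P1 xT yT by simp_all
  obtain b e2 where pb2: "is_pullback C e (y \<cdot> e1) b e2"
    by (rule pullback_exists[OF ea ye1(1) ye1(2)[symmetric]])
  note P2 = pullback_arrs[OF pb2, unfolded homs_def]
  show ?thesis
  proof (rule that[OF regular_epi_pullback[OF e pb1] regular_epi_pullback[OF e pb2]])
    show "e \<cdot> (a1 \<cdot> e2) = x \<cdot> (e1 \<cdot> e2)"
      using P1 P2 xT yT ea comp_assoc[of e2 a1 e] comp_assoc[of e2 e1 x] by simp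
    show "e \<cdot> b = y \<cdot> (e1 \<cdot> e2)"
      using P1 P2 xT yT by simp
  qed (use P1 P2 xT yT in \<open>simp_all add: homs_def\<close>)
qed

lemma kernel_pair_coequalizer_factor_mono:
  assumes kp: "is_pullback C f f p q" and co: "is_coequalizer C p q e"
    and m: "m \<in> homs C (cd e) (cd f)" and fac: "m \<cdot> e = f"
  shows "is_mono C m"
  unfolding is_mono_def
proof (intro conjI ballI impI)
  show "m \<in> Arr" using m by (simp add: homs_def)
  fix x y
  assume "x \<in> Arr" "y \<in> Arr" and "cd x = dm m \<and> cd y = dm m \<and> dm x = dm y \<and> m \<cdot> x = m \<cdot> y"
  then have x: "x \<in> homs C (dm x) (cd e)" and y: "y \<in> homs C (dm x) (cd e)"
    and mxy: "m \<cdot> x = m \<cdot> y"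
    using m by (auto simp: homs_def)
  note K = pullback_arrs[OF kp] and E = coequalizer_arrs(5-7)[OF co]
  have e: "regular_epi C e"
    using co unfolding regular_epi_def by blast
  obtain e1 e2 a b where e12: "regular_epi C e1" "regular_epi C e2" "e1 \<in> homs C (cd e2) (dm x)"
    and ab: "a \<in> homs C (dm e2) (dm e)" "b \<in> homs C (dm e2) (dm e)"
      "e \<cdot> a = x \<cdot> (e1 \<cdot> e2)" "e \<cdot> b = y \<cdot> (e1 \<cdot> e2)"
    using regular_epi_lift_pair[OF e x y] by blast
  have a2: "e2 \<in> Arr" using regular_epi_arr[OF e12(2)] .
  have "f \<cdot> a = m \<cdot> (x \<cdot> (e1 \<cdot> e2))"
    using fac ab m E comp_assoc[of a e m] by (simp add: homs_def)
  also have "\<dots> = m \<cdot> (y \<cdot> (e1 \<cdot> e2))"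
    using mxy x y e12 m a2 comp_assoc[of "e1 \<cdot> e2" x m] comp_assoc[of "e1 \<cdot> e2" y m]
    by (simp add: homs_def)
  also have "\<dots> = f \<cdot> b"
    using fac ab m E comp_assoc[of b e m] by (simp add: homs_def)
  finally have "f \<cdot> a = f \<cdot> b" .
  moreover have "a \<in> homs C (dm e2) (dm f)" "b \<in> homs C (dm e2) (dm f)"
    using ab K E by (simp_all add: homs_def)
  ultimately obtain c where c: "c \<in> homs C (dm e2) (dm p)" "p \<cdot> c = a" "q \<cdot> c = b"
    using pullback_lift[OF kp] by blast
  have "x \<cdot> (e1 \<cdot> e2) = y \<cdot> (e1 \<cdot> e2)"
    using ab c K E comp_assoc[of c p e] comp_assoc[of c q e] by (simp add: homs_def)
  then have "x \<cdot> e1 = y \<cdot> e1"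
    using regular_epi_cancel[OF e12(2), of "x \<cdot> e1" "y \<cdot> e1"] x y e12 a2 by (simp add: homs_def)
  then show "x = y"
    using regular_epi_cancel[OF e12(1), of x y] x y e12 by (simp add: homs_def)
qed

lemma regular_epi_mono_factorization:
  assumes f: "f \<in> Arr"
  obtains e m where "regular_epi C e" "is_mono C m" "e \<in> homs C (dm f) (dm m)"
    "m \<in> homs C (dm m) (cd f)" "m \<cdot> e = f"
proof -
  obtain p q where kp: "is_pullback C f f p q"
    using pullback_exists[OF f f] by blast
  then obtain e where co: "is_coequalizer C p q e"
    by (rule kernel_pair_coequalizer)
  note K = pullback_arrs[OF kp] and E = coequalizer_arrs(5-7)[OF co]
  have "dm f = cd p"
    using K(1) by (simp add: homs_def)
  then obtain m where m: "m \<in> homs C (cd e) (cd f)" "m \<cdot> e = f"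
    using coequalizer_factor_unique[OF co f _ K(3)] by (metis ex1_implies_ex)
  have "regular_epi C e"
    using co unfolding regular_epi_def by blast
  moreover have "is_mono C m"
    using kernel_pair_coequalizer_factor_mono[OF kp co m] .
  ultimately show ?thesis
    using that m K E by (simp add: homs_def)
qed

lemma factors_through_of_pairwise_factorizations:
  assumes dec: "has_finite_2fold_subobject_decompositions C"
    and prod: "is_product C n A P \<pi>" "0 < n"
    and r: "is_mono C r" "cd r = P"
    and g: "g \<in> homs C D P" "mem_sub C r g"
    and pairs: "\<And>i j. i < n \<Longrightarrow> j < n \<Longrightarrow>
      \<exists>c \<in> homs C D (dm r). \<pi> i \<cdot> g = \<pi> i \<cdot> (r \<cdot> c) \<and> \<pi> j \<cdot> g = \<pi> j \<cdot> (r \<cdot> c)"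
  shows "mem_sub C g r"
proof -
  have ra: "r \<in> homs C (dm r) P"
    using mono_arr[OF r(1)] r(2) by (simp add: homs_def)
  obtain e s where es: "regular_epi C e" "is_mono C s" "e \<in> homs C D (dm s)"
    "s \<in> homs C (dm s) P" "s \<cdot> e = g"
    using regular_epi_mono_factorization[of g] g(1) by (auto simp: homs_def)
  obtain d where d: "d \<in> homs C (dm r) D" "g \<cdot> d = r"
    using g(2) g(1) unfolding mem_sub_def by (auto simp: homs_def)
  have "same_sub C s r"
  proof (rule same_sub_of_2fold_decompositions[OF dec prod es(2) _ r])
    fix i j Q \<rho> h m m'
    assume ij: "i < n" "j < n" and prod2: "is_product C 2 (\<lambda>k. if k = 0 then A i else A j) Q \<rho>"
      and h: "h \<in> homs C P Q" "\<rho> 0 \<cdot> h = \<pi> i" "\<rho> 1 \<cdot> h = \<pi> j"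
      and im: "is_image C h s m" "is_image C h r m'"
    obtain c where c: "c \<in> homs C D (dm r)" "\<pi> i \<cdot> g = \<pi> i \<cdot> (r \<cdot> c)" "\<pi> j \<cdot> g = \<pi> j \<cdot> (r \<cdot> c)"
      using pairs[OF ij] by blast
    have \<rho>: "\<rho> 0 \<in> homs C Q (A i)" "\<rho> 1 \<in> homs C Q (A j)"
      using product_proj[OF prod2, of 0] product_proj[OF prod2, of 1] by simp_all
    have "h \<cdot> g = h \<cdot> (r \<cdot> c)"
    proof (rule product2_ext[OF prod2])
      show "\<rho> 0 \<cdot> (h \<cdot> g) = \<rho> 0 \<cdot> (h \<cdot> (r \<cdot> c))"
        using comp_assoc_eq[OF h(2), of g] comp_assoc_eq[OF h(2), of "r \<cdot> c"] c ra g(1) h(1) \<rho>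
        by (simp add: homs_def)
      show "\<rho> 1 \<cdot> (h \<cdot> g) = \<rho> 1 \<cdot> (h \<cdot> (r \<cdot> c))"
        using comp_assoc_eq[OF h(3), of g] comp_assoc_eq[OF h(3), of "r \<cdot> c"] c ra g(1) h(1) \<rho>
        by (simp add: homs_def)
    qed (use c ra g(1) h(1) in \<open>simp_all add: homs_def\<close>)
    moreover have "s \<cdot> (e \<cdot> d) = r"
      using es d comp_assoc[of d e s] by (simp add: homs_def)
    ultimately show "same_sub C m m'"
      using same_image_of_cover[OF im h(1) es(4) ra es(1,3) c(1), of "e \<cdot> d"] es(3,5) d(1)
      by (simp add: homs_def)
  qed (use ra es in \<open>simp_all add: homs_def\<close>)
  then have "mem_sub C s r"
    unfolding same_sub_def sub_le_def mem_sub_def by blast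
  moreover have "mem_sub C g s"
    unfolding mem_sub_def using es g(1) by (auto simp: homs_def)
  ultimately show ?thesis
    using mem_sub_trans ra by (simp add: homs_def)
qed

lemma majority_diagram_exists:
  assumes prod: "is_product C 3 (triple X Y Z) P \<pi>" and r: "r \<in> homs C R P"
  obtains p1 q1 p2 q2 \<phi> \<psi> d\<phi> d\<psi>
    where "majority_diagram C X Y Z P \<pi> R r p1 q1 p2 q2 \<phi> \<psi> d\<phi> d\<psi>"
proof -
  have proj: "\<pi> 0 \<in> homs C P X" "\<pi> 1 \<in> homs C P Y" "\<pi> 2 \<in> homs C P Z"
    using product_proj[OF prod, of 0] product_proj[OF prod, of 1] product_proj[OF prod, of 2]
    by (simp_all add: triple_def)
  have "\<pi> 0 \<cdot> r \<in> Arr" "\<pi> 1 \<cdot> r \<in> Arr"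
    using proj r by (simp_all add: homs_def)
  then obtain p1 q1 p2 q2 where
    kp: "is_pullback C (\<pi> 0 \<cdot> r) (\<pi> 0 \<cdot> r) p1 q1" "is_pullback C (\<pi> 1 \<cdot> r) (\<pi> 1 \<cdot> r) p2 q2"
    using pullback_exists by metis
  have pq: "p1 \<in> homs C (dm p1) R" "q1 \<in> homs C (dm p1) R"
    "p2 \<in> homs C (dm p2) R" "q2 \<in> homs C (dm p2) R"
    using pullback_arrs(1,2)[OF kp(1)] pullback_arrs(1,2)[OF kp(2)] proj r
    by (simp_all add: homs_def)
  obtain \<phi> where \<phi>: "\<phi> \<in> homs C (dm p1) P" "\<pi> 0 \<cdot> \<phi> = \<pi> 0 \<cdot> (r \<cdot> p1)"
    "\<pi> 1 \<cdot> \<phi> = \<pi> 1 \<cdot> (r \<cdot> p1)" "\<pi> 2 \<cdot> \<phi> = \<pi> 2 \<cdot> (r \<cdot> q1)"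
    using product3_lift[OF prod, of "\<pi> 0 \<cdot> (r \<cdot> p1)" "dm p1" "\<pi> 1 \<cdot> (r \<cdot> p1)" "\<pi> 2 \<cdot> (r \<cdot> q1)"]
      proj r pq by (auto simp: homs_def)
  obtain \<psi> where \<psi>: "\<psi> \<in> homs C (dm p2) P" "\<pi> 0 \<cdot> \<psi> = \<pi> 0 \<cdot> (r \<cdot> q2)"
    "\<pi> 1 \<cdot> \<psi> = \<pi> 1 \<cdot> (r \<cdot> p2)" "\<pi> 2 \<cdot> \<psi> = \<pi> 2 \<cdot> (r \<cdot> p2)"
    using product3_lift[OF prod, of "\<pi> 0 \<cdot> (r \<cdot> q2)" "dm p2" "\<pi> 1 \<cdot> (r \<cdot> p2)" "\<pi> 2 \<cdot> (r \<cdot> p2)"]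
      proj r pq by (auto simp: homs_def)
  have "\<phi> \<in> Arr" "\<psi> \<in> Arr" "cd \<phi> = cd \<psi>"
    using \<phi>(1) \<psi>(1) by (simp_all add: homs_def)
  then obtain d\<phi> d\<psi> where "is_pullback C \<phi> \<psi> d\<phi> d\<psi>"
    by (rule pullback_exists)
  then show ?thesis
    using that prod r kp \<phi> \<psi> category
    by (simp add: majority_diagram_def majority_diagram_axioms_def category_ctx_def)
qed

lemma mono_majority_selecting:
  assumes dec: "has_finite_2fold_subobject_decompositions C"
    and prod: "is_product C 3 (triple X Y Z) P \<pi>" and r_mono: "is_mono C r" "cd r = P"
  shows "majority_selecting C X Y Z P \<pi> r"
  unfolding majority_selecting_def
proof (intro ballI impI)
  fix S x x' y y' z z' w1 w2 w3 w
  assume "S \<in> cObj C" "x \<in> homs C S X" "x' \<in> homs C S X" "y \<in> homs C S Y"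
    "y' \<in> homs C S Y" "z \<in> homs C S Z" "z' \<in> homs C S Z"
    and w: "w1 \<in> homs C S P" "w2 \<in> homs C S P" "w3 \<in> homs C S P" "w \<in> homs C S P"
    and H: "has_components C \<pi> w1 x y z' \<and> has_components C \<pi> w2 x y' z \<and>
      has_components C \<pi> w3 x' y z \<and> has_components C \<pi> w x y z \<and>
      mem_sub C w1 r \<and> mem_sub C w2 r \<and> mem_sub C w3 r"
  have ra: "r \<in> homs C (dm r) P"
    using mono_arr[OF r_mono(1)] r_mono(2) by (simp add: homs_def)
  have dm_w: "dm w1 = S" "dm w2 = S" "dm w3 = S"
    using w by (simp_all add: homs_def)
  obtain u1 u2 u3 where u: "u1 \<in> homs C S (dm r)" "u2 \<in> homs C S (dm r)" "u3 \<in> homs C S (dm r)"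
    and ru: "r \<cdot> u1 = w1" "r \<cdot> u2 = w2" "r \<cdot> u3 = w3"
    using H unfolding mem_sub_def dm_w by blast
  obtain p1 q1 p2 q2 \<phi> \<psi> d\<phi> d\<psi>
    where "majority_diagram C X Y Z P \<pi> (dm r) r p1 q1 p2 q2 \<phi> \<psi> d\<phi> d\<psi>"
    using majority_diagram_exists[OF prod ra] by blast
  then interpret majority_diagram C X Y Z P \<pi> "dm r" r p1 q1 p2 q2 \<phi> \<psi> d\<phi> d\<psi> .
  have "mem_sub C w majority_map"
    by (rule factors_through_majority_map[OF u w(4)]) (use H in \<open>simp_all add: ru has_components_def\<close>)
  moreover have "mem_sub C majority_map r"
  proof (rule factors_through_of_pairwise_factorizations[OF dec prod _ r_mono])
    show "majority_map \<in> homs C (dm d\<phi>) P"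
      using homs by (simp add: homs_def)
    have id: "cid C (dm r) \<in> homs C (dm r) (dm r)" "r \<cdot> cid C (dm r) = r"
      using id_hom[OF dom_obj] comp_id mono_arr[OF r_mono(1)] by auto
    show "mem_sub C r majority_map"
      by (rule factors_through_majority_map[OF id(1) id(1) id(1) ra]) (simp_all only: id(2))
  qed (use pairwise_covered in simp_all)
  ultimately show "mem_sub C w r"
    using mem_sub_trans ra by (simp add: homs_def)
qed

end

theorem theorem4p5:
  fixes C :: "('o, 'm) cat"
  assumes "regular_category C"
    and "has_finite_2fold_subobject_decompositions C"
  shows "majority_category C"
proof -
  interpret regular_ctx C
    using assms(1) by unfold_locales (simp_all add: regular_category_def)
  show ?thesis
    unfolding majority_category_def using mono_majority_selecting[OF assms(2)] by blast
qed

end
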